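(* Let $l<h$ be constants and $n$ a positive integer, and let $\phi_0,\phi_1,\phi_2,\ldots$ be univariate polynomials (a polynomial basis), with $\phi_i$ used for index $i$. Suppose there is a function $\xi(m)$ such that for every $m$, every $a_0,\ldots,a_m\in\mathbb{R}^d$ and the univariate polynomial $g(t)=\sum_{i=0}^m a_i\phi_i(t)$, $$\|a_i\|\le \xi(m)\max_{l\le t\le h}\|g(t)\|\quad (i=0,\ldots,m).$$ Suppose also there is a function $\zeta(m_1,\ldots,m_n)$ such that for all $\bar a_{i_1,\ldots,i_n}\in\mathbb{R}^d$ ($i_j=0,\ldots,m_j$) and $\bar g(x_1,\ldots,x_n)=\sum_{i_1=0}^{m_1}\cdots\sum_{i_n=0}^{m_n}\bar a_{i_1,\ldots,i_n}\phi_{i_1}(x_1)\cdots\phi_{i_n}(x_n)$, $$\|\bar a_{i_1,\ldots,i_n}\|\le \zeta(m_1,\ldots,m_n)\max_{l\le x_1,\ldots,x_n\le h}\|\bar g(x_1,\ldots,x_n)\|.$$ Then for all $b_{i_1,\ldots,i_{n+1}}\in\mathbb{R}^d$ ($i_j=0,\ldots,m_j$) and $f(x_1,\ldots,x_{n+1})=\sum_{i_1=0}^{m_1}\cdots\sum_{i_{n+1}=0}^{m_{n+1}} b_{i_1,\ldots,i_{n+1}}\phi_{i_1}(x_1)\cdots\phi_{i_{n+1}}(x_{n+1})$, $$\|b_{i_1,\ldots,i_{n+1}}\|\le \zeta(m_1,\ldots,m_n)\,\xi(m_{n+1})\max_{l\le x_1,\ldots,x_{n+1}\le h}\|f(x_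1,\ldots,x_{n+1})\|.$$
   Context: $\|\cdot\|$ denotes a fixed vector norm on $\mathbb{R}^d$ (the paper works with the infinity norm). *)

theory Defs
  imports "HOL-Analysis.Analysis" "HOL-Computational_Algebra.Polynomial"
begin

definition is_vec_norm :: "(real ^ 'd \<Rightarrow> real) \<Rightarrow> bool" where
  "is_vec_norm N \<longleftrightarrow>
     (\<forall>x. 0 \<le> N x) \<and> (\<forall>x. N x = 0 \<longleftrightarrow> x = 0) \<and>
     (\<forall>x y. N (x + y) \<le> N x + N y) \<and> (\<forall>c x. N (c *\<^sub>R x) = \<bar>c\<bar> * N x)"

text \<open>Multi-indices (i_1,...,i_n) are functions on {..<n} (index j stands for variable x_(j+1));
  the degree vector (m_1,...,m_n) is a list ms of length n.\<close>
definition multi_idx :: "nat \<Rightarrow> nat list \<Rightarrow> (nat \<Rightarrow> nat) set" where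
  "multi_idx n ms = PiE {..<n} (\<lambda>j. {..ms ! j})"

definition box :: "nat \<Rightarrow> real \<Rightarrow> real \<Rightarrow> (nat \<Rightarrow> real) set" where
  "box n l h = PiE {..<n} (\<lambda>j. {l..h})"

definition multi_eval :: "(nat \<Rightarrow> real poly) \<Rightarrow> nat \<Rightarrow> nat list \<Rightarrow> ((nat \<Rightarrow> nat) \<Rightarrow> 'v::real_vector)
    \<Rightarrow> (nat \<Rightarrow> real) \<Rightarrow> 'v" where
  "multi_eval phi n ms a x = (\<Sum>i\<in>multi_idx n ms. (\<Prod>j<n. poly (phi (i j)) (x j)) *\<^sub>R a i)"

end

theory Submission
  imports Defs
begin

text \<open>Freeze the first n variables at x. In the last variable f is then a univariate expansion
  whose k-th coefficient c_k(x) is the n-variate expansion with coefficients b_(g,k). The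
  hypothesis on xi bounds each c_k(x) by xi(m_(n+1)) times the maximum of f, uniformly in x, and
  the hypothesis on zeta applied to c_k bounds its coefficients. Both constants are nonnegative
  because the hypotheses hold for constant coefficients 1.\<close>

lemma is_vec_norm_nonneg: "is_vec_norm N \<Longrightarrow> 0 \<le> N x"
  unfolding is_vec_norm_def by blast

lemma is_vec_norm_scaleR: "is_vec_norm N \<Longrightarrow> N (c *\<^sub>R x) = \<bar>c\<bar> * N x"
  unfolding is_vec_norm_def by blast

lemma is_vec_norm_one_pos: "is_vec_norm N \<Longrightarrow> 0 < N (1 :: real ^ 'd)"
proof -
  assume N: "is_vec_norm N"
  have "(1 :: real ^ 'd) \<noteq> 0" by simp
  with N show ?thesis
    unfolding is_vec_norm_def by (metis order_le_less)
qed

lemma is_vec_norm_sum_le: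
  assumes "is_vec_norm N" "finite A"
  shows "N (\<Sum>i\<in>A. f i) \<le> (\<Sum>i\<in>A. N (f i))"
  using assms(2)
proof (induction A rule: finite_induct)
  case empty
  then show ?case using assms(1) unfolding is_vec_norm_def by (metis order_refl sum.empty)
next
  case (insert x F)
  have "N (f x + sum f F) \<le> N (f x) + N (sum f F)"
    using assms(1) unfolding is_vec_norm_def by blast
  then show ?case using insert by simp
qed

lemma is_vec_norm_sum_scaleR_le:
  assumes N: "is_vec_norm N" and "finite A" and B: "\<And>i. i \<in> A \<Longrightarrow> \<bar>c i\<bar> \<le> B i"
  shows "N (\<Sum>i\<in>A. c i *\<^sub>R a i) \<le> (\<Sum>i\<in>A. B i * N (a i))"
proof -
  have "N (\<Sum>i\<in>A. c i *\<^sub>R a i) \<le> (\<Sum>i\<in>A. \<bar>c i\<bar> * N (a i))"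
    using is_vec_norm_sum_le[OF N \<open>finite A\<close>, of "\<lambda>i. c i *\<^sub>R a i"]
    by (simp add: is_vec_norm_scaleR[OF N])
  also have "\<dots> \<le> (\<Sum>i\<in>A. B i * N (a i))"
    by (intro sum_mono mult_right_mono B is_vec_norm_nonneg[OF N])
  finally show ?thesis .
qed

lemma nonneg_if_vec_norm_one_le:
  assumes "is_vec_norm N" "N (1 :: real ^ 'd) \<le> c * s" "0 \<le> s"
  shows "0 \<le> (c :: real)"
  using is_vec_norm_one_pos[OF assms(1)] assms(2,3)
  by (smt (verit) mult_nonpos_nonneg)

lemma SUP_nonneg_real:
  fixes f :: "'a \<Rightarrow> real"
  assumes "bdd_above (f ` A)" "A \<noteq> {}" "\<And>x. x \<in> A \<Longrightarrow> 0 \<le> f x"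
  shows "0 \<le> (SUP x\<in>A. f x)"
  using assms by (metis cSUP_upper2 ex_in_conv)

lemma poly_bounded_on_interval:
  fixes phi :: "nat \<Rightarrow> real poly"
  obtains B where "\<And>k t. t \<in> {l..h} \<Longrightarrow> \<bar>poly (phi k) t\<bar> \<le> B k"
proof -
  have "\<exists>b. \<forall>t\<in>{l..h}. \<bar>poly (phi k) t\<bar> \<le> b" for k
  proof -
    have "compact (poly (phi k) ` {l..h})"
      by (intro compact_continuous_image continuous_intros) auto
    then have "bounded (poly (phi k) ` {l..h})"
      by (rule compact_imp_bounded)
    then show ?thesis
      unfolding bounded_iff by auto
  qed
  then show ?thesis using that by metis
qed

lemma finite_multi_idx: "finite (multi_idx n ms)"
  unfolding multi_idx_def by (rule finite_PiE) auto

lemma box_nonempty: "l \<le> h \<Longrightarrow> box n l h \<noteq> {}"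
  unfolding box_def by (simp add: PiE_eq_empty_iff)

lemma fun_upd_in_box_Suc: "x \<in> box n l h \<Longrightarrow> t \<in> {l..h} \<Longrightarrow> x(n := t) \<in> box (Suc n) l h"
  unfolding box_def lessThan_Suc by (simp add: PiE_fun_upd)

lemma multi_eval_fun_upd_eq: "multi_eval phi n ms a (x(n := t)) = multi_eval phi n ms a x"
  unfolding multi_eval_def by (intro sum.cong refl arg_cong2[where f=scaleR] prod.cong) auto

lemma bdd_above_norm_multi_eval:
  assumes N: "is_vec_norm N"
  shows "bdd_above ((\<lambda>x. N (multi_eval phi n ms (a :: _ \<Rightarrow> real ^ 'd) x)) ` box n l h)"
proof -
  obtain B where B: "\<And>k t. t \<in> {l..h} \<Longrightarrow> \<bar>poly (phi k) t\<bar> \<le> B k"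
    using poly_bounded_on_interval by metis
  have "N (multi_eval phi n ms a x) \<le> (\<Sum>i\<in>multi_idx n ms. (\<Prod>j<n. B (i j)) * N (a i))"
    if "x \<in> box n l h" for x
  proof -
    have x: "\<And>j. j < n \<Longrightarrow> x j \<in> {l..h}"
      using that unfolding box_def by auto
    have "\<bar>\<Prod>j<n. poly (phi (i j)) (x j)\<bar> \<le> (\<Prod>j<n. B (i j))" for i
      unfolding abs_prod by (intro prod_mono) (use B x in auto)
    then show ?thesis
      unfolding multi_eval_def by (intro is_vec_norm_sum_scaleR_le[OF N finite_multi_idx])
  qed
  then show ?thesis by (rule bdd_aboveI2)
qed

lemma bdd_above_norm_poly_sum:
  fixes phi :: "nat \<Rightarrow> real poly"
  assumes N: "is_vec_norm N"
  shows "bdd_above ((\<lambda>t. N (\<Sum>k\<le>m. poly (phi k) t *\<^sub>R (a k :: real ^ 'd))) ` {l..h})"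
proof -
  obtain B where B: "\<And>k t. t \<in> {l..h} \<Longrightarrow> \<bar>poly (phi k) t\<bar> \<le> B k"
    using poly_bounded_on_interval by metis
  have "N (\<Sum>k\<le>m. poly (phi k) t *\<^sub>R a k) \<le> (\<Sum>k\<le>m. B k * N (a k))" if "t \<in> {l..h}" for t
    by (intro is_vec_norm_sum_scaleR_le[OF N] B that) simp
  then show ?thesis by (rule bdd_aboveI2)
qed

lemma last_eq_nth: "length ms = Suc n \<Longrightarrow> last ms = ms ! n"
  by (cases ms rule: rev_cases) auto

lemma multi_idx_butlast: "length ms = Suc n \<Longrightarrow> multi_idx n (butlast ms) = PiE {..<n} (\<lambda>j. {..ms ! j})"
  unfolding multi_idx_def by (intro PiE_cong) (simp add: nth_butlast)

lemma multi_idx_Suc_split: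
  assumes len: "length ms = Suc n" and i: "i \<in> multi_idx (Suc n) ms"
  shows "restrict i {..<n} \<in> multi_idx n (butlast ms)"
    and "(restrict i {..<n})(n := i n) = i"
    and "i n \<le> last ms"
proof -
  have iPi: "i \<in> PiE (insert n {..<n}) (\<lambda>j. {..ms ! j})"
    using i unfolding multi_idx_def lessThan_Suc .
  show "restrict i {..<n} \<in> multi_idx n (butlast ms)"
    using iPi unfolding multi_idx_butlast[OF len] by auto
  show "(restrict i {..<n})(n := i n) = i"
  proof
    fix j
    show "((restrict i {..<n})(n := i n)) j = i j"
      using PiE_arb[OF iPi, of j] by (cases "j < n") auto
  qed
  show "i n \<le> last ms"
    using iPi unfolding last_eq_nth[OF len] by auto
qed

lemma multi_eval_Suc:
  assumes len: "length ms = Suc n"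
  shows "multi_eval phi (Suc n) ms b x =
    (\<Sum>k\<le>last ms. poly (phi k) (x n) *\<^sub>R multi_eval phi n (butlast ms) (\<lambda>g. b (g(n := k))) x)"
proof -
  let ?I = "PiE {..<n} (\<lambda>j. {..ms ! j})"
  let ?upd = "\<lambda>(k, g). g(n := k)"
  have idx: "multi_idx (Suc n) ms = ?upd ` ({..ms ! n} \<times> ?I)"
    unfolding multi_idx_def lessThan_Suc by (simp add: PiE_insert_eq)
  have inj: "inj_on ?upd ({..ms ! n} \<times> ?I)"
    using inj_combinator[of n "{..<n}" "\<lambda>j. {..ms ! j}"] by simp
  have prod_upd: "(\<Prod>j<Suc n. poly (phi ((g(n := k)) j)) (x j)) =
      poly (phi k) (x n) * (\<Prod>j<n. poly (phi (g j)) (x j))" for g k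
    by (simp add: prod.lessThan_Suc)
  have "multi_eval phi (Suc n) ms b x =
      (\<Sum>(k, g)\<in>{..ms ! n} \<times> ?I. (\<Prod>j<Suc n. poly (phi ((g(n := k)) j)) (x j)) *\<^sub>R b (g(n := k)))"
    unfolding multi_eval_def idx by (subst sum.reindex[OF inj]) (simp add: case_prod_unfold)
  also have "\<dots> = (\<Sum>k\<le>ms ! n. poly (phi k) (x n) *\<^sub>R
      (\<Sum>g\<in>?I. (\<Prod>j<n. poly (phi (g j)) (x j)) *\<^sub>R b (g(n := k))))"
    by (subst sum.cartesian_product[symmetric]) (simp add: prod_upd scaleR_sum_right mult.commute)
  finally show ?thesis
    unfolding multi_eval_def multi_idx_butlast[OF len] last_eq_nth[OF len] .
qed

lemma univariate_coeff_bound_nonneg: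
  fixes N :: "real ^ 'd \<Rightarrow> real"
  assumes N: "is_vec_norm N" and lh: "l \<le> h"
    and hxi: "\<And>(a :: nat \<Rightarrow> real ^ 'd) i. i \<le> m \<Longrightarrow>
        N (a i) \<le> xi m * (SUP t\<in>{l..h}. N (\<Sum>k\<le>m. poly (phi k) t *\<^sub>R a k))"
  shows "0 \<le> xi m"
proof (rule nonneg_if_vec_norm_one_le[OF N])
  let ?a = "\<lambda>_. 1 :: real ^ 'd"
  show "N 1 \<le> xi m * (SUP t\<in>{l..h}. N (\<Sum>k\<le>m. poly (phi k) t *\<^sub>R ?a k))"
    using hxi[of m ?a] by simp
  show "0 \<le> (SUP t\<in>{l..h}. N (\<Sum>k\<le>m. poly (phi k) t *\<^sub>R ?a k))"
    using lh by (intro SUP_nonneg_real bdd_above_norm_poly_sum[OF N] is_vec_norm_nonneg[OF N]) auto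
qed

lemma multivariate_coeff_bound_nonneg:
  fixes N :: "real ^ 'd \<Rightarrow> real"
  assumes N: "is_vec_norm N" and lh: "l \<le> h"
    and hzeta: "\<And>(a :: (nat \<Rightarrow> nat) \<Rightarrow> real ^ 'd) i. i \<in> multi_idx n ms \<Longrightarrow>
        N (a i) \<le> zeta ms * (SUP x\<in>box n l h. N (multi_eval phi n ms a x))"
  shows "0 \<le> zeta ms"
proof (rule nonneg_if_vec_norm_one_le[OF N])
  let ?a = "\<lambda>_. 1 :: real ^ 'd"
  have idx: "restrict (\<lambda>_. 0) {..<n} \<in> multi_idx n ms"
    unfolding multi_idx_def by auto
  show "N 1 \<le> zeta ms * (SUP x\<in>box n l h. N (multi_eval phi n ms ?a x))"
    using hzeta[where a="?a", OF idx] by simp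
  show "0 \<le> (SUP x\<in>box n l h. N (multi_eval phi n ms ?a x))"
    by (intro SUP_nonneg_real bdd_above_norm_multi_eval[OF N] box_nonempty[OF lh]
        is_vec_norm_nonneg[OF N])
qed

lemma slice_coeff_bound:
  fixes N :: "real ^ 'd \<Rightarrow> real" and b :: "(nat \<Rightarrow> nat) \<Rightarrow> real ^ 'd"
  assumes N: "is_vec_norm N" and lh: "l \<le> h" and len: "length ms = Suc n"
    and hxi: "\<And>(a :: nat \<Rightarrow> real ^ 'd) i. i \<le> last ms \<Longrightarrow>
        N (a i) \<le> xi (last ms) * (SUP t\<in>{l..h}. N (\<Sum>k\<le>last ms. poly (phi k) t *\<^sub>R a k))"
    and x: "x \<in> box n l h" and k: "k \<le> last ms"
  shows "N (multi_eval phi n (butlast ms) (\<lambda>g. b (g(n := k))) x)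
    \<le> xi (last ms) * (SUP y\<in>box (Suc n) l h. N (multi_eval phi (Suc n) ms b y))"
proof -
  define c where "c j = multi_eval phi n (butlast ms) (\<lambda>g. b (g(n := j))) x" for j
  have slice: "(\<Sum>j\<le>last ms. poly (phi j) t *\<^sub>R c j) = multi_eval phi (Suc n) ms b (x(n := t))" for t
    by (simp add: multi_eval_Suc[OF len] multi_eval_fun_upd_eq c_def)
  have "(SUP t\<in>{l..h}. N (\<Sum>j\<le>last ms. poly (phi j) t *\<^sub>R c j))
      \<le> (SUP y\<in>box (Suc n) l h. N (multi_eval phi (Suc n) ms b y))"
    unfolding slice using lh
    by (intro cSUP_least cSUP_upper fun_upd_in_box_Suc[OF x] bdd_above_norm_multi_eval[OF N]) auto
  with hxi[OF k] univariate_coeff_bound_nonneg[where m="last ms" and xi=xi and phi=phi, OF N lh hxi] show ?thesis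
    unfolding c_def[symmetric] by (meson mult_left_mono order_trans)
qed

theorem lemma1:
  fixes N :: "real ^ 'd \<Rightarrow> real"
    and phi :: "nat \<Rightarrow> real poly"
    and l h :: real and n :: nat
    and xi :: "nat \<Rightarrow> real" and zeta :: "nat list \<Rightarrow> real"
  assumes norm: "is_vec_norm N"
    and lh: "l < h" and npos: "0 < n"
    and hxi: "\<And>(m::nat) (a :: nat \<Rightarrow> real ^ 'd) i. i \<le> m \<Longrightarrow>
        N (a i) \<le> xi m * (SUP t\<in>{l..h}. N (\<Sum>k\<le>m. poly (phi k) t *\<^sub>R a k))"
    and hzeta: "\<And>ms (a :: (nat \<Rightarrow> nat) \<Rightarrow> real ^ 'd) i. length ms = n \<Longrightarrow> i \<in> multi_idx n ms \<Longrightarrow>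
        N (a i) \<le> zeta ms * (SUP x\<in>box n l h. N (multi_eval phi n ms a x))"
  shows "\<And>ms (b :: (nat \<Rightarrow> nat) \<Rightarrow> real ^ 'd) i. length ms = Suc n \<Longrightarrow> i \<in> multi_idx (Suc n) ms \<Longrightarrow>
        N (b i) \<le> zeta (butlast ms) * xi (last ms) *
                  (SUP x\<in>box (Suc n) l h. N (multi_eval phi (Suc n) ms b x))"
proof -
  fix ms and b :: "(nat \<Rightarrow> nat) \<Rightarrow> real ^ 'd" and i
  assume len: "length ms = Suc n" and i: "i \<in> multi_idx (Suc n) ms"
  let ?S = "SUP x\<in>box (Suc n) l h. N (multi_eval phi (Suc n) ms b x)"
  let ?c = "\<lambda>g. b (g(n := i n))"
  have len': "length (butlast ms) = n" using len by simp
  have le: "l \<le> h" using lh by simp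
  note split = multi_idx_Suc_split[OF len i]
  have "N (b i) = N (?c (restrict i {..<n}))"
    using split(2) by simp
  also have "\<dots> \<le> zeta (butlast ms) * (SUP x\<in>box n l h. N (multi_eval phi n (butlast ms) ?c x))"
    by (rule hzeta[OF len' split(1)])
  also have "\<dots> \<le> zeta (butlast ms) * (xi (last ms) * ?S)"
  proof (rule mult_left_mono)
    show "(SUP x\<in>box n l h. N (multi_eval phi n (butlast ms) ?c x)) \<le> xi (last ms) * ?S"
      using slice_coeff_bound[where phi=phi and xi=xi and b=b, OF norm le len hxi _ split(3)]
        box_nonempty[OF le]
      by (intro cSUP_least)
    show "0 \<le> zeta (butlast ms)"
      using multivariate_coeff_bound_nonneg[where zeta=zeta and phi=phi, OF norm le hzeta[OF len']] .
  qed
  finally show "N (b i) \<le> zeta (butlast ms) * xi (last ms) * ?S"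
    by (simp add: mult.assoc)
qed

end
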